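(* There exists $n_0$ such that for every prime $n\ge n_0$ and every $q\in\{1,\dots,n-1\}$, every eigenvalue of the real symmetric matrix $\mathcal M_{n,q}$ defined below is at most $4-\frac{3}{5n}$.
   Context: For an integer $n\ge 3$ and an integer $q$, $\mathcal M_{n,q}=(a_{jk})_{j,k=0}^{n-1}$ is the $n\times n$ real matrix with diagonal entries $a_{jj}=2\cos\frac{2\pi qj}{n}$, with $a_{j,j+1}=a_{j+1,j}=1$ for $0\le j\le n-2$, $a_{0,n-1}=a_{n-1,0}=1$, and all other entries $0$. It is the matrix of the element $\tilde\Delta_n=x+x^{-1}+y+y^{-1}$ of the group algebra of the finite Heisenberg group $H_n$ in the $n$-dimensional representation $T_q$ given by $T_q(x)u_j=u_{j+1}$, $T_q(y)u_j=e^{2\pi iqj/n}u_j$ (indices mod $n$). *)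

theory Defs
  imports Complex_Main "HOL-Computational_Algebra.Primes" "Jordan_Normal_Form.Char_Poly"
begin

definition Mnq :: "nat \<Rightarrow> int \<Rightarrow> real mat" where
  "Mnq n q = mat n n (\<lambda>(j,k).
     if j = k then 2 * cos (2 * pi * real_of_int q * real j / real n)
     else if k = j + 1 \<or> j = k + 1 \<or> (j = 0 \<and> k = n - 1) \<or> (j = n - 1 \<and> k = 0) then 1
     else 0)"

end

(*
  For an eigenvector v of M = Mnq n q with eigenvalue e, summation by parts gives
    (4 - e) |v|^2 = sum_j V_j v_j^2 + sum_j (v_j - v_(j+1))^2,  V_j = 2 - 2 cos (2 pi q j / n) >= 0,
  so 4 - M is a discrete Schroedinger operator on the n-cycle. On a window of L = 2T + 1
  consecutive sites, a Poincare inequality bounds sum v^2 by 2L(L - 1) times this energy as soon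
  as the potential has mass at least 1/(L - 1) there, and averaging over all n windows gives the
  same bound on the whole cycle. Since n is prime, j -> q j mod n is injective, so at most 2t + 1
  sites of a window have q j within distance t of a multiple of n; as V_j grows quadratically with
  that distance, every window carries potential mass of order T^3/n^2. The choice T ~ sqrt (n/5)
  meets the mass condition with 2L(L - 1) <= 5n/3, whence 4 - e >= 3/(5n).
*)

theory Submission
  imports Defs
begin

lemma square_sum_le_card_mult_sum_squares:
  fixes f :: "'a \<Rightarrow> real"
  shows "(\<Sum>i\<in>A. f i)\<^sup>2 \<le> real (card A) * (\<Sum>i\<in>A. (f i)\<^sup>2)"
proof -
  have "0 \<le> (\<Sum>i\<in>A. \<Sum>j\<in>A. (f i - f j)\<^sup>2)"
    by (intro sum_nonneg) simp
  also have "\<dots> = 2 * (real (card A) * (\<Sum>i\<in>A. (f i)\<^sup>2) - (\<Sum>i\<in>A. f i)\<^sup>2)"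
    by (simp add: power2_diff sum.distrib sum_subtractf sum_distrib_left sum_distrib_right
        power2_eq_square algebra_simps)
  finally show ?thesis by simp
qed

lemma square_diff_le_path_energy:
  fixes u :: "nat \<Rightarrow> real"
  assumes "a < L" "b < L"
  shows "(u a - u b)\<^sup>2 \<le> real (L - 1) * (\<Sum>i<L-1. (u i - u (i + 1))\<^sup>2)"
proof -
  have ordered: "(u b - u a)\<^sup>2 \<le> real (L - 1) * (\<Sum>i<L-1. (u i - u (i + 1))\<^sup>2)"
    if "a \<le> b" "b < L" for a b
  proof -
    have "(u b - u a)\<^sup>2 = (\<Sum>i=a..<b. u (i + 1) - u i)\<^sup>2"
      using sum_Suc_diff'[OF \<open>a \<le> b\<close>, of u] by simp
    also have "\<dots> \<le> real (b - a) * (\<Sum>i=a..<b. (u i - u (i + 1))\<^sup>2)"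
      using square_sum_le_card_mult_sum_squares[of "\<lambda>i. u (i + 1) - u i" "{a..<b}"]
      by (simp add: power2_commute)
    also have "\<dots> \<le> real (L - 1) * (\<Sum>i<L-1. (u i - u (i + 1))\<^sup>2)"
      using that by (intro mult_mono sum_mono2 sum_nonneg) auto
    finally show ?thesis .
  qed
  show ?thesis
    using ordered[of a b] ordered[of b a] assms by (cases "a \<le> b") (auto simp: power2_commute)
qed

lemma sum_squares_le_path_energy:
  fixes u V :: "nat \<Rightarrow> real"
  assumes V_nonneg: "\<And>i. i < L \<Longrightarrow> 0 \<le> V i"
    and V_large: "1 \<le> (\<Sum>i<L. V i) * real (L - 1)"
  shows "(\<Sum>i<L. (u i)\<^sup>2) \<le> 2 * real L * real (L - 1) *
           ((\<Sum>i<L. V i * (u i)\<^sup>2) + (\<Sum>i<L-1. (u i - u (i + 1))\<^sup>2))"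
proof -
  define P where "P = (\<Sum>i<L. V i * (u i)\<^sup>2)"
  define D where "D = (\<Sum>i<L-1. (u i - u (i + 1))\<^sup>2)"
  define K where "K = (\<Sum>i<L. V i) * real (L - 1)"
  have "1 \<le> K" unfolding K_def by (rule V_large)
  have "0 \<le> P" unfolding P_def using V_nonneg by (auto intro: sum_nonneg)
  have pointwise: "(u a)\<^sup>2 \<le> 2 * real (L - 1) * (P + D)" if "a < L" for a
  proof -
    define c where "c = 2 * real (L - 1) * D"
    have "V j * (u a)\<^sup>2 \<le> V j * (2 * (u j)\<^sup>2 + c)" if "j < L" for j
    proof -
      have "(u a)\<^sup>2 \<le> 2 * (u j)\<^sup>2 + 2 * (u a - u j)\<^sup>2"
        using zero_le_power2[of "u a - 2 * u j"] by (simp add: power2_eq_square algebra_simps)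
      also have "\<dots> \<le> 2 * (u j)\<^sup>2 + c"
        using square_diff_le_path_energy[OF \<open>a < L\<close> \<open>j < L\<close>, of u] unfolding c_def D_def by simp
      finally show ?thesis using V_nonneg[OF that] by (rule mult_left_mono)
    qed
    then have "(\<Sum>j<L. V j * (u a)\<^sup>2) \<le> (\<Sum>j<L. V j * (2 * (u j)\<^sup>2 + c))"
      by (intro sum_mono) simp
    then have "(\<Sum>j<L. V j) * (u a)\<^sup>2 \<le> 2 * P + c * (\<Sum>j<L. V j)"
      unfolding P_def by (simp add: sum.distrib sum_distrib_left sum_distrib_right algebra_simps)
    then have "K * (u a)\<^sup>2 \<le> K * c + 2 * real (L - 1) * P"
      unfolding K_def using mult_right_mono[of _ _ "real (L - 1)"] by (fastforce simp: algebra_simps)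
    also have "\<dots> \<le> K * c + K * (2 * real (L - 1) * P)"
      using mult_right_mono[OF \<open>1 \<le> K\<close>, of "2 * real (L - 1) * P"] \<open>0 \<le> P\<close> by simp
    finally have "K * (u a)\<^sup>2 \<le> K * (2 * real (L - 1) * (P + D))"
      unfolding c_def by (simp add: algebra_simps)
    then show ?thesis using \<open>1 \<le> K\<close> by simp
  qed
  have "(\<Sum>a<L. (u a)\<^sup>2) \<le> (\<Sum>a<L. 2 * real (L - 1) * (P + D))"
    using pointwise by (intro sum_mono) auto
  also have "\<dots> = 2 * real L * real (L - 1) * (P + D)"
    by (simp only: sum_constant card_lessThan mult_ac)
  finally show ?thesis unfolding P_def D_def .
qed

lemma inj_on_add_mod:
  fixes n :: nat
  assumes "L \<le> n"
  shows "inj_on (\<lambda>i. (s + i) mod n) {..<L}"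
proof -
  have cancel: "i = j" if "i \<le> j" "j < n" "(s + i) mod n = (s + j) mod n" for i j
  proof -
    have "n dvd j - i" using mod_eq_dvd_iff_nat[of "s + i" "s + j" n] that by simp
    then show ?thesis using that nat_dvd_not_less[of "j - i" n] by linarith
  qed
  show ?thesis
    by (rule inj_onI) (use assms in \<open>metis cancel lessThan_iff nat_le_linear order_less_le_trans\<close>)
qed

lemma sum_mod_shift:
  fixes n :: nat
  assumes "0 < n"
  shows "(\<Sum>j<n. f ((j + s) mod n)) = (\<Sum>j<n. f j)"
proof -
  have "inj_on (\<lambda>j. (j + s) mod n) {..<n}"
    using inj_on_add_mod[of n n s] by (simp add: add.commute)
  moreover have "(\<lambda>j. (j + s) mod n) ` {..<n} = {..<n}"
    using calculation assms by (intro endo_inj_surj) auto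
  ultimately show ?thesis
    using sum.reindex[of "\<lambda>j. (j + s) mod n" "{..<n}" f] by simp
qed

definition cycle_energy :: "nat \<Rightarrow> (nat \<Rightarrow> real) \<Rightarrow> (nat \<Rightarrow> real) \<Rightarrow> real" where
  "cycle_energy n V v = (\<Sum>j<n. V j * (v j)\<^sup>2) + (\<Sum>j<n. (v j - v ((j + 1) mod n))\<^sup>2)"

lemma sum_squares_le_cycle_energy:
  fixes v V :: "nat \<Rightarrow> real"
  assumes "0 < n" and V_nonneg: "\<And>j. j < n \<Longrightarrow> 0 \<le> V j"
    and V_large: "\<And>s. s < n \<Longrightarrow> 1 \<le> (\<Sum>i<L. V ((s + i) mod n)) * real (L - 1)"
  shows "(\<Sum>j<n. (v j)\<^sup>2) \<le> 2 * real L * real (L - 1) * cycle_energy n V v"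
proof -
  define K where "K = 2 * real L * real (L - 1)"
  define w where "w = (\<lambda>j. (v j - v ((j + 1) mod n))\<^sup>2)"
  have "0 < L" using V_large[OF \<open>0 < n\<close>] by (cases L) auto
  have window: "(\<Sum>i<L. (v ((s + i) mod n))\<^sup>2) \<le> K *
      ((\<Sum>i<L. V ((s + i) mod n) * (v ((s + i) mod n))\<^sup>2) + (\<Sum>i<L-1. w ((s + i) mod n)))"
    if "s < n" for s
  proof -
    have "(\<Sum>i<L-1. w ((s + i) mod n)) = (\<Sum>i<L-1. (v ((s + i) mod n) - v ((s + (i + 1)) mod n))\<^sup>2)"
      by (simp add: w_def mod_Suc_eq)
    then show ?thesis
      using sum_squares_le_path_energy[where L = L and V = "\<lambda>i. V ((s + i) mod n)"
          and u = "\<lambda>i. v ((s + i) mod n)", OF _ V_large[OF that]]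
        V_nonneg \<open>0 < n\<close> unfolding K_def by simp
  qed
  (* summing over all n windows counts every site L times and every edge L - 1 times *)
  have shift: "(\<Sum>s<n. \<Sum>i<M. g ((s + i) mod n)) = real M * (\<Sum>j<n. g j)" for M and g :: "nat \<Rightarrow> real"
    using sum_mod_shift[OF \<open>0 < n\<close>, of g] by (subst sum.swap) simp
  have "real L * (\<Sum>j<n. (v j)\<^sup>2) \<le> (\<Sum>s<n. K *
      ((\<Sum>i<L. V ((s + i) mod n) * (v ((s + i) mod n))\<^sup>2) + (\<Sum>i<L-1. w ((s + i) mod n))))"
    unfolding shift[of "\<lambda>j. (v j)\<^sup>2", symmetric] by (intro sum_mono window) simp
  also have "\<dots> = K * (real L * (\<Sum>j<n. V j * (v j)\<^sup>2) + real (L - 1) * (\<Sum>j<n. w j))"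
    by (simp only: sum_distrib_left[symmetric] sum.distrib shift[of "\<lambda>j. V j * (v j)\<^sup>2"] shift)
  also have "\<dots> \<le> K * (real L * cycle_energy n V v)"
    unfolding cycle_energy_def w_def K_def distrib_left
    by (intro mult_left_mono add_left_mono mult_right_mono sum_nonneg) auto
  also have "\<dots> = real L * (K * cycle_energy n V v)"
    by (simp only: mult.left_commute)
  finally show ?thesis using \<open>0 < L\<close> unfolding K_def by simp
qed

definition potential :: "nat \<Rightarrow> int \<Rightarrow> nat \<Rightarrow> real" where
  "potential n q j = 2 - 2 * cos (2 * pi * real_of_int q * real j / real n)"

lemma Mnq_index:
  assumes "3 \<le> n" "j < n" "k < n"
  shows "Mnq n q $$ (j, k) =
    (if j = k then 2 * cos (2 * pi * real_of_int q * real j / real n) else 0)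
    + (if k = (j + 1) mod n then 1 else 0) + (if j = (k + 1) mod n then 1 else 0)"
  using assms by (auto simp: Mnq_def mod_Suc)

lemma Mnq_quadratic_form:
  assumes "3 \<le> n" "v \<in> carrier_vec n"
  shows "v \<bullet> (Mnq n q *\<^sub>v v) =
    (\<Sum>j<n. 2 * cos (2 * pi * real_of_int q * real j / real n) * (v $ j)\<^sup>2)
    + 2 * (\<Sum>j<n. v $ j * v $ ((j + 1) mod n))"
proof -
  let ?c = "\<lambda>j. 2 * cos (2 * pi * real_of_int q * real j / real n)"
  have "v \<bullet> (Mnq n q *\<^sub>v v) = (\<Sum>j<n. \<Sum>k<n. Mnq n q $$ (j, k) * v $ j * v $ k)"
    using assms(2) by (simp add: Mnq_def scalar_prod_def mult_mat_vec_def sum_distrib_left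
        atLeast0LessThan mult_ac)
  also have "\<dots> = (\<Sum>j<n. \<Sum>k<n. (if k = j then ?c j * v $ j * v $ k else 0)
      + (if k = (j + 1) mod n then v $ j * v $ k else 0)
      + (if j = (k + 1) mod n then v $ j * v $ k else 0))"
    using assms(1) by (intro sum.cong refl) (simp add: Mnq_index distrib_right)
  also have "\<dots> = (\<Sum>j<n. ?c j * (v $ j)\<^sup>2) + (\<Sum>j<n. v $ j * v $ ((j + 1) mod n))
      + (\<Sum>j<n. \<Sum>k<n. if j = (k + 1) mod n then v $ j * v $ k else 0)"
    by (simp add: sum.distrib power2_eq_square mult.assoc)
  also have "(\<Sum>j<n. \<Sum>k<n. if j = (k + 1) mod n then v $ j * v $ k else 0)
      = (\<Sum>k<n. v $ k * v $ ((k + 1) mod n))"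
    using assms(1) by (subst sum.swap) (simp add: mult.commute)
  finally show ?thesis by simp
qed

lemma Mnq_eigenvector_energy:
  assumes "3 \<le> n" "v \<in> carrier_vec n" "Mnq n q *\<^sub>v v = e \<cdot>\<^sub>v v"
  shows "(4 - e) * (\<Sum>j<n. (v $ j)\<^sup>2) = cycle_energy n (potential n q) (\<lambda>j. v $ j)"
proof -
  define N where "N = (\<Sum>j<n. (v $ j)\<^sup>2)"
  define X where "X = (\<Sum>j<n. v $ j * v $ ((j + 1) mod n))"
  define C where "C = (\<Sum>j<n. 2 * cos (2 * pi * real_of_int q * real j / real n) * (v $ j)\<^sup>2)"
  have "e * N = v \<bullet> (Mnq n q *\<^sub>v v)"
    using assms(2,3) by (simp add: N_def scalar_prod_def sum_distrib_left power2_eq_square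
        atLeast0LessThan mult_ac)
  also have "\<dots> = C + 2 * X"
    unfolding C_def X_def by (rule Mnq_quadratic_form[OF assms(1,2)])
  finally have "e * N = C + 2 * X" .
  moreover have "(\<Sum>j<n. (v $ j - v $ ((j + 1) mod n))\<^sup>2) = 2 * N - 2 * X"
    using sum_mod_shift[of n "\<lambda>j. (v $ j)\<^sup>2" 1] assms(1)
    by (simp add: N_def X_def power2_diff sum.distrib sum_subtractf sum_distrib_left mult.assoc)
  moreover have "(\<Sum>j<n. potential n q j * (v $ j)\<^sup>2) = 2 * N - C"
    by (simp add: potential_def N_def C_def left_diff_distrib sum_subtractf sum_distrib_left)
  ultimately show ?thesis
    unfolding cycle_energy_def N_def[symmetric] by (simp add: left_diff_distrib)
qed

definition cyc_dist :: "nat \<Rightarrow> int \<Rightarrow> nat" where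
  "cyc_dist n x = min (nat (x mod int n)) (n - nat (x mod int n))"

lemma cyc_dist_le_half: "2 * cyc_dist n x \<le> n"
  unfolding cyc_dist_def by simp

lemma cos_cyc_dist:
  assumes "0 < n"
  shows "cos (2 * pi * real_of_int x / real n) = cos (2 * pi * real (cyc_dist n x) / real n)"
proof -
  define r where "r = x mod int n"
  have r_bounds: "0 \<le> r" "r < int n" using assms by (simp_all add: r_def)
  have "real_of_int x = real_of_int (x div int n) * real n + real_of_int r"
    unfolding r_def by (metis of_int_add of_int_mult of_int_of_nat_eq div_mult_mod_eq)
  then have "2 * pi * real_of_int x / real n = 2 * pi * real_of_int r / real n + 2 * pi * real_of_int (x div int n)"
    using assms by (simp add: field_simps)
  then have cos_r: "cos (2 * pi * real_of_int x / real n) = cos (2 * pi * real_of_int r / real n)"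
    by (simp add: cos_add)
  have "2 * pi * real (n - nat r) / real n = 2 * pi - 2 * pi * real_of_int r / real n"
    using assms r_bounds by (simp add: of_nat_diff field_simps)
  then have "cos (2 * pi * real (n - nat r) / real n) = cos (2 * pi * real_of_int r / real n)"
    by simp
  then show ?thesis
    using cos_r r_bounds unfolding cyc_dist_def r_def[symmetric] by (cases "nat r \<le> n - nat r") auto
qed

lemma card_cyc_dist_le:
  assumes "0 < n" and inj: "inj_on (\<lambda>i. x i mod int n) A"
  shows "card {i \<in> A. cyc_dist n (x i) \<le> t} \<le> 2 * t + 1"
proof -
  let ?B = "{i \<in> A. cyc_dist n (x i) \<le> t}"
  have "(\<lambda>i. x i mod int n) ` ?B \<subseteq> {0..int t} \<union> {int n - int t..int n - 1}"
    using assms(1) by (auto simp: cyc_dist_def)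
  then have "card ((\<lambda>i. x i mod int n) ` ?B) \<le> card ({0..int t} \<union> {int n - int t..int n - 1})"
    by (rule card_mono[rotated]) simp
  also have "\<dots> \<le> card {0..int t} + card {int n - int t..int n - 1}"
    by (rule card_Un_le)
  finally show ?thesis
    using card_image[OF inj_on_subset[OF inj, of ?B]] by simp
qed

lemma inj_on_mult_mod:
  fixes q :: int
  assumes "coprime q (int n)"
  shows "inj_on (\<lambda>j. q * int j mod int n) {..<n}"
proof (rule inj_onI)
  fix j k assume "j \<in> {..<n}" "k \<in> {..<n}" and "q * int j mod int n = q * int k mod int n"
  then have "int n dvd q * (int j - int k)"
    by (simp add: mod_eq_dvd_iff right_diff_distrib)
  then have "int n dvd int j - int k"
    using assms by (simp add: coprime_commute coprime_dvd_mult_right_iff)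
  then have "int j mod int n = int k mod int n"
    by (simp add: mod_eq_dvd_iff)
  then show "j = k" using \<open>j \<in> {..<n}\<close> \<open>k \<in> {..<n}\<close> by simp
qed

lemma two_minus_two_cos_ge:
  fixes y :: real
  assumes "0 \<le> y" "y \<le> 1/2"
  shows "18/5 * y\<^sup>2 \<le> 2 - 2 * cos (2 * y)"
proof -
  have "\<bar>sin y - y\<bar> \<le> y ^ 3 / 6"
    using Maclaurin_sin_bound[of y 3] assms by (simp add: sin_coeff_def eval_nat_numeral fact_numeral)
  then have "y - y ^ 3 / 6 \<le> sin y"
    using abs_ge_minus_self[of "sin y - y"] by linarith
  moreover have "y ^ 3 / 6 \<le> y / 24"
    using assms mult_left_mono[of "y\<^sup>2" "1/4" y] power_mono[of y "1/2" 2]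
    by (simp add: power3_eq_cube power2_eq_square)
  ultimately have "23/24 * y \<le> sin y" by linarith
  then have "(23/24 * y)\<^sup>2 \<le> (sin y)\<^sup>2"
    using assms by (intro power_mono) auto
  then have "529/576 * y\<^sup>2 \<le> (sin y)\<^sup>2"
    by (simp add: power_mult_distrib power_divide)
  moreover have "2 - 2 * cos (2 * y) = 4 * (sin y)\<^sup>2"
    by (simp add: cos_double sin_squared_eq)
  ultimately show ?thesis using zero_le_power2[of y] by linarith
qed

lemma potential_ge_cyc_dist:
  assumes "0 < n" "8 * T \<le> n"
  shows "18/5 * (pi * real (min (cyc_dist n (q * int j)) T) / real n)\<^sup>2 \<le> potential n q j"
proof -
  define d where "d = cyc_dist n (q * int j)"
  define y where "y = pi * real (min d T) / real n"
  have "0 \<le> y" unfolding y_def by simp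
  have "y \<le> 4 * real T / real n"
    unfolding y_def using assms(1) pi_less_4
    by (intro divide_right_mono mult_mono) auto
  also have "\<dots> \<le> 1/2" using assms by (simp add: field_simps)
  finally have "y \<le> 1/2" .
  have "2 * real d \<le> real n" using cyc_dist_le_half[of n "q * int j"] unfolding d_def by linarith
  then have "cos (2 * pi * real d / real n) \<le> cos (2 * y)"
    unfolding y_def using assms(1) \<open>0 \<le> y\<close>
    by (intro cos_monotone_0_pi_le) (auto simp: field_simps)
  moreover have "potential n q j = 2 - 2 * cos (2 * pi * real d / real n)"
    unfolding potential_def d_def using cos_cyc_dist[OF assms(1), of "q * int j"] by (simp add: mult.assoc)
  ultimately show ?thesis
    using two_minus_two_cos_ge[OF \<open>0 \<le> y\<close> \<open>y \<le> 1/2\<close>] unfolding y_def d_def by linarith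
qed

lemma square_min_eq_sum_odd: "(real (min d T))\<^sup>2 = (\<Sum>t<T. if t < d then 2 * real t + 1 else 0)"
proof (induction T)
  case (Suc T)
  show ?case
  proof (cases "T < d")
    case True
    then have "min d (Suc T) = Suc T" "min d T = T" by auto
    then show ?thesis using Suc True by (simp add: power2_eq_square algebra_simps)
  next
    case False
    then have "min d (Suc T) = d" "min d T = d" by auto
    then show ?thesis using Suc False by simp
  qed
qed simp

lemma sum_odd_mult_diff:
  "(\<Sum>t<k. (2 * real t + 1) * (2 * real T - 2 * real t))
     = 2 * real T * real k ^ 2 - (real k - 1) * real k * (4 * real k + 1) / 3"
  by (induction k) (simp_all add: field_simps power2_eq_square)

lemma sum_square_min_ge:
  fixes d :: "'a \<Rightarrow> nat"
  assumes "finite A" "card A = 2 * T + 1"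
    and few_small: "\<And>t. card {i \<in> A. d i \<le> t} \<le> 2 * t + 1"
  shows "2 * real T ^ 3 / 3 \<le> (\<Sum>i\<in>A. (real (min (d i) T))\<^sup>2)"
proof -
  have many_large: "2 * real T - 2 * real t \<le> real (card {i \<in> A. t < d i})" for t
  proof -
    have "card A = card {i \<in> A. t < d i} + card {i \<in> A. d i \<le> t}"
      using assms(1) by (subst card_Un_disjoint[symmetric]) (auto intro: arg_cong[where f = card])
    then show ?thesis using assms(2) few_small[of t] by linarith
  qed
  have "2 * real T ^ 3 / 3 \<le> 2 * real T ^ 3 / 3 + (3 * (real T)\<^sup>2 + real T) / 3"
    by simp
  also have "\<dots> = (\<Sum>t<T. (2 * real t + 1) * (2 * real T - 2 * real t))"
    by (simp only: sum_odd_mult_diff) (simp add: power2_eq_square power3_eq_cube field_simps)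
  also have "\<dots> \<le> (\<Sum>t<T. (2 * real t + 1) * real (card {i \<in> A. t < d i}))"
    by (intro sum_mono mult_left_mono many_large) auto
  also have "\<dots> = (\<Sum>t<T. \<Sum>i\<in>A. if t < d i then 2 * real t + 1 else 0)"
    using assms(1) by (simp add: sum.inter_filter[symmetric] mult.commute)
  also have "\<dots> = (\<Sum>i\<in>A. (real (min (d i) T))\<^sup>2)"
    by (subst sum.swap) (simp add: square_min_eq_sum_odd)
  finally show ?thesis .
qed

lemma window_potential_ge:
  assumes "prime n" "\<not> int n dvd q" "8 * T \<le> n"
  shows "12/5 * pi\<^sup>2 * real T ^ 3 / (real n)\<^sup>2 \<le> (\<Sum>i<2 * T + 1. potential n q ((s + i) mod n))"
proof -
  let ?L = "2 * T + 1"
  define d where "d i = cyc_dist n (q * int ((s + i) mod n))" for i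
  have "0 < n" using assms(1) prime_gt_0_nat by blast
  have "?L \<le> n" using assms(3) prime_ge_2_nat[OF assms(1)] by (cases "T = 0") auto
  have "coprime q (int n)"
    using assms(1,2) prime_imp_coprime[of "int n" q] by (simp add: coprime_commute)
  then have "inj_on ((\<lambda>j. q * int j mod int n) \<circ> (\<lambda>i. (s + i) mod n)) {..<?L}"
    using \<open>0 < n\<close>
    by (intro comp_inj_on inj_on_add_mod[OF \<open>?L \<le> n\<close>] inj_on_subset[OF inj_on_mult_mod]) auto
  then have count: "card {i \<in> {..<?L}. d i \<le> t} \<le> 2 * t + 1" for t
    unfolding d_def comp_def by (rule card_cyc_dist_le[OF \<open>0 < n\<close>])
  define S where "S = (\<Sum>i<?L. (real (min (d i) T))\<^sup>2)"
  have "2 * real T ^ 3 / 3 \<le> S"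
    unfolding S_def using count by (intro sum_square_min_ge) auto
  have "12/5 * pi\<^sup>2 * real T ^ 3 / (real n)\<^sup>2 = 18/5 * (pi / real n)\<^sup>2 * (2 * real T ^ 3 / 3)"
    by (simp add: power_divide)
  also have "\<dots> \<le> 18/5 * (pi / real n)\<^sup>2 * S"
    using \<open>2 * real T ^ 3 / 3 \<le> S\<close> by (intro mult_left_mono) auto
  also have "\<dots> = (\<Sum>i<?L. 18/5 * (pi * real (min (d i) T) / real n)\<^sup>2)"
    unfolding S_def sum_distrib_left by (intro sum.cong refl) (simp add: power_divide power_mult_distrib)
  also have "\<dots> \<le> (\<Sum>i<?L. potential n q ((s + i) mod n))"
    unfolding d_def by (intro sum_mono potential_ge_cyc_dist \<open>0 < n\<close> assms(3))
  finally show ?thesis .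
qed

lemma eigenvalue_Mnq_gap:
  assumes "prime n" "\<not> int n dvd q" "1 \<le> T" "8 * T \<le> n"
    and radius: "(real n)\<^sup>2 \<le> 24/5 * pi\<^sup>2 * real T ^ 4"
    and "eigenvalue (Mnq n q) e"
  shows "1 \<le> 2 * real (2 * T + 1) * real (2 * T) * (4 - e)"
proof -
  let ?L = "2 * T + 1"
  have "3 \<le> n" "0 < n" using assms(3,4) by linarith+
  obtain v where v: "v \<in> carrier_vec n" "v \<noteq> 0\<^sub>v n" "Mnq n q *\<^sub>v v = e \<cdot>\<^sub>v v"
    using assms(6) unfolding eigenvalue_def eigenvector_def by (auto simp: Mnq_def)
  define N where "N = (\<Sum>j<n. (v $ j)\<^sup>2)"
  obtain j where "j < n" "v $ j \<noteq> 0"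
    using v(1,2) by (metis carrier_vecD eq_vecI index_zero_vec)
  then have "0 < N"
    unfolding N_def by (intro sum_pos2[of _ j]) auto
  have windows: "1 \<le> (\<Sum>i<?L. potential n q ((s + i) mod n)) * real (?L - 1)" for s
  proof -
    have "1 \<le> 12/5 * pi\<^sup>2 * real T ^ 3 / (real n)\<^sup>2 * real (2 * T)"
      using radius \<open>0 < n\<close> by (simp add: field_simps power_numeral_reduce)
    also have "\<dots> \<le> (\<Sum>i<?L. potential n q ((s + i) mod n)) * real (2 * T)"
      using window_potential_ge[OF assms(1,2,4)] by (intro mult_right_mono) auto
    finally show ?thesis by simp
  qed
  have "N \<le> 2 * real ?L * real (?L - 1) * cycle_energy n (potential n q) (\<lambda>j. v $ j)"
    unfolding N_def
    by (rule sum_squares_le_cycle_energy[OF \<open>0 < n\<close> _ windows]) (simp add: potential_def)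
  also have "\<dots> = (2 * real ?L * real (2 * T) * (4 - e)) * N"
    unfolding N_def Mnq_eigenvector_energy[OF \<open>3 \<le> n\<close> v(1,3), symmetric] by simp
  finally show ?thesis using \<open>0 < N\<close> by simp
qed

lemma pi_ge_3: "3 \<le> pi"
  using sin_x_le_x[of "pi / 6"] by (simp add: sin_30)

lemma window_radius_exists:
  assumes "10000 \<le> n"
  shows "\<exists>T. 1 \<le> T \<and> 8 * T \<le> n \<and> (real n)\<^sup>2 \<le> 24/5 * pi\<^sup>2 * real T ^ 4
    \<and> 2 * real (2 * T + 1) * real (2 * T) \<le> 5 * real n / 3"
proof -
  define x where "x = real n"
  (* this T satisfies x / 6 \<le> T\<^sup>2 \<le> x / 5 *)
  define T where "T = nat \<lfloor>sqrt (x / 5)\<rfloor>"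
  define t where "t = real T"
  have "10000 \<le> x" "0 \<le> x" unfolding x_def using assms by simp_all
  have "0 \<le> t" "0 \<le> sqrt (x / 5)" unfolding t_def using \<open>0 \<le> x\<close> by simp_all
  have "t = of_int \<lfloor>sqrt (x / 5)\<rfloor>" unfolding t_def T_def using \<open>0 \<le> sqrt (x / 5)\<close> by simp
  then have "t \<le> sqrt (x / 5)" "sqrt (x / 5) < t + 1" by linarith+
  then have t_sq: "t\<^sup>2 \<le> x / 5" "x / 5 < (t + 1)\<^sup>2"
    using power_mono[of t "sqrt (x / 5)" 2] power_strict_mono[of "sqrt (x / 5)" "t + 1" 2]
      \<open>0 \<le> t\<close> \<open>0 \<le> sqrt (x / 5)\<close> \<open>10000 \<le> x\<close> by simp_all
  have "(x / 60 - 1)\<^sup>2 - x / 5 = x * (x - 840) / 3600 + 1"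
    by (simp add: power2_eq_square field_simps)
  moreover have "0 \<le> x * (x - 840)"
    using \<open>10000 \<le> x\<close> by (intro mult_nonneg_nonneg) linarith+
  ultimately have "x / 5 \<le> (x / 60 - 1)\<^sup>2"
    by linarith
  have "t \<le> x / 60 - 1"
  proof (rule power2_le_imp_le)
    show "t\<^sup>2 \<le> (x / 60 - 1)\<^sup>2" using t_sq(1) \<open>x / 5 \<le> (x / 60 - 1)\<^sup>2\<close> by linarith
    show "0 \<le> x / 60 - 1" using \<open>10000 \<le> x\<close> by linarith
  qed
  have "(t + 1)\<^sup>2 = t\<^sup>2 + 2 * t + 1"
    by (simp add: power2_eq_square algebra_simps)
  then have "x / 6 \<le> t\<^sup>2"
    using t_sq(2) \<open>t \<le> x / 60 - 1\<close> by linarith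
  have "1 \<le> T"
  proof (rule ccontr)
    assume "\<not> 1 \<le> T"
    then have "t = 0" unfolding t_def by simp
    then show False using \<open>x / 6 \<le> t\<^sup>2\<close> \<open>10000 \<le> x\<close> by simp
  qed
  have "8 * T \<le> n"
    using \<open>t \<le> x / 60 - 1\<close> \<open>10000 \<le> x\<close> unfolding t_def x_def by linarith
  have "(x / 6)\<^sup>2 \<le> (t\<^sup>2)\<^sup>2"
    by (rule power_mono) (use \<open>x / 6 \<le> t\<^sup>2\<close> \<open>0 \<le> x\<close> in simp_all)
  then have "9 * (x / 6)\<^sup>2 \<le> pi\<^sup>2 * t ^ 4"
    using power_mono[OF pi_ge_3, of 2] by (intro mult_mono) (simp_all add: power_mult[symmetric])
  then have "(real n)\<^sup>2 \<le> 4 * (pi\<^sup>2 * real T ^ 4)"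
    unfolding x_def t_def by (simp add: power_divide)
  then have "(real n)\<^sup>2 \<le> 24/5 * pi\<^sup>2 * real T ^ 4"
    using zero_le_power2[of "real n"] unfolding mult.assoc by linarith
  moreover have "2 * real (2 * T + 1) * real (2 * T) = 8 * t\<^sup>2 + 4 * t"
    unfolding t_def by (simp add: power2_eq_square algebra_simps)
  then have "2 * real (2 * T + 1) * real (2 * T) \<le> 5 * real n / 3"
    using t_sq(1) \<open>t \<le> x / 60 - 1\<close> unfolding x_def by linarith
  ultimately show ?thesis
    using \<open>1 \<le> T\<close> \<open>8 * T \<le> n\<close> by blast
qed

theorem lemma2p3:
  shows "\<exists>n0::nat. \<forall>n::nat. \<forall>q::int. prime n \<and> n \<ge> n0 \<and> 1 \<le> q \<and> q \<le> int n - 1 \<longrightarrow>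
           (\<forall>ev::real. eigenvalue (Mnq n q) ev \<longrightarrow> ev \<le> 4 - 3 / (5 * real n))"
proof (intro exI[of _ 10000] allI impI)
  fix n :: nat and q :: int and e :: real
  assume "prime n \<and> n \<ge> 10000 \<and> 1 \<le> q \<and> q \<le> int n - 1" and ev: "eigenvalue (Mnq n q) e"
  then have n: "prime n" "10000 \<le> n" and "1 \<le> q" "q \<le> int n - 1" by auto
  then have q: "\<not> int n dvd q" using zdvd_imp_le[of "int n" q] by auto
  obtain T where T: "1 \<le> T" "8 * T \<le> n" "(real n)\<^sup>2 \<le> 24/5 * pi\<^sup>2 * real T ^ 4"
    and K_le: "2 * real (2 * T + 1) * real (2 * T) \<le> 5 * real n / 3"
    using window_radius_exists[OF n(2)] by blast
  define K where "K = 2 * real (2 * T + 1) * real (2 * T)"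
  have gap: "1 \<le> K * (4 - e)"
    unfolding K_def by (rule eigenvalue_Mnq_gap[OF n(1) q T ev])
  have "0 < K" unfolding K_def using T(1) by simp
  moreover have "0 < K * (4 - e)" using gap by linarith
  ultimately have "0 < 4 - e" using zero_less_mult_pos by blast
  then have "K * (4 - e) \<le> 5 * real n / 3 * (4 - e)"
    using K_le unfolding K_def by (intro mult_right_mono) auto
  with gap have "3 \<le> 5 * real n * (4 - e)" by linarith
  then show "e \<le> 4 - 3 / (5 * real n)"
    using n(2) by (simp add: field_simps)
qed

end
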